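(* Let $q$ be a prime power, $n$ a block length, $r$ a locality parameter with $r\mid n$, and $\ell$ an integer with $0\le \ell< n/2-n/r$. Let $\mathcal{C}=\mathrm{CSS}(C_X,C_Z)$ be a random qLRC with parameters $n,r,\ell$ over $\mathbb{F}_q$ (as defined in the context). For any $\delta,\epsilon>0$, if $\ell\geq(H_q(\delta)+\epsilon)n$ then \[ \Pr[d(\mathcal{C})\geq\delta n] > 1-2q^{-\epsilon n}. \] In particular, if $q\geq 2^{2/\epsilon}$, then for all $\ell\geq(\delta+\epsilon)n$, \[ \Pr[d(\mathcal{C})\geq\delta n] > 1-2q^{-\epsilon n/2}. \]
   Context: For $x,y\in\mathbb{F}_q^n$, $x\cdot y=\sum_i x_iy_i$; for a linear code $C\subseteq\mathbb{F}_q^n$, $C^\perp=\{y: y\cdot c=0\ \forall c\in C\}$. For linear codes $C_X,C_Z\subseteq\mathbb{F}_q^n$ with $C_X^\perp\subseteq C_Z$, the CSS code $\mathrm{CSS}(C_X,C_Z)=\mathrm{span}\{\sum_{y\in C_X^\perp}|x+y\rangle: x\in C_Z\}\subseteq(\mathbb{C}^q)^{\otimes n}$; its distance is $d(\mathcal{C})=\min\{|y|: y\in (C_Z\setminus C_X^\perp)\cup(C_X\setminus C_Z^\perp)\}$, where $|y|$ is the Hamming weight. Random qLRC: initialize $H_X,H_Z\in\mathbb{F}_q^{(n/r)\times n}$ by, for row $j\in\{0,\dots,n/r-1\}$ and column $i\in\{0,\dots,n-1\}$: $(H_X)_{j,i}=1$ if $i\in\{rj,\dots,rj+r-1\}$ and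 $0$ otherwise; $(H_Z)_{j,i}=-(r-1)$ if $i=rj$, $1$ if $i\in\{rj+1,\dots,rj+r-1\}$, and $0$ otherwise. Then (1) repeat $\ell$ times: sample a uniformly random vector in $\text{row-span}(H_Z)^\perp\setminus\text{row-span}(H_X)$ and append it as a new row of $H_X$; (2) repeat $\ell$ times: sample a uniformly random vector in $\text{row-span}(H_X)^\perp\setminus\text{row-span}(H_Z)$ and append it as a new row of $H_Z$. Set $C_X=\ker H_X$, $C_Z=\ker H_Z$ (so $C_X^\perp\subseteq C_Z$). The $q$-ary entropy function is $H_q(x)=x\log_q(q-1)-x\log_q x-(1-x)\log_q(1-x)$.
   Formalization: Both claims are asserted only for $\delta$ with $0 < \delta \le 1 - 1/q$, so delta is also bounded above by 1 - 1/q. Apart from conventions, each condition added here is assumed in the paper as well or is needed for the statement above to hold. *)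

theory Defs
  imports "HOL-Probability.Probability"
begin

text \<open>Vectors of F_q^n are represented as functions nat => 'a that vanish outside {0..<n}.\<close>

definition vecs :: "nat \<Rightarrow> (nat \<Rightarrow> 'a::zero) set" where
  "vecs n = {v. \<forall>i\<ge>n. v i = 0}"

definition dotp :: "nat \<Rightarrow> (nat \<Rightarrow> 'a::comm_ring_1) \<Rightarrow> (nat \<Rightarrow> 'a) \<Rightarrow> 'a" where
  "dotp n x y = (\<Sum>i<n. x i * y i)"

definition hweight :: "nat \<Rightarrow> (nat \<Rightarrow> 'a::zero) \<Rightarrow> nat" where
  "hweight n y = card {i. i < n \<and> y i \<noteq> 0}"

definition dual :: "nat \<Rightarrow> (nat \<Rightarrow> 'a::comm_ring_1) set \<Rightarrow> (nat \<Rightarrow> 'a) set" where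
  "dual n S = {y \<in> vecs n. \<forall>c\<in>S. dotp n y c = 0}"

definition row_span :: "(nat \<Rightarrow> 'a::comm_ring_1) list \<Rightarrow> (nat \<Rightarrow> 'a) set" where
  "row_span H = {(\<lambda>i. \<Sum>j<length H. c j * (H ! j) i) | c. True}"

definition kerm :: "nat \<Rightarrow> (nat \<Rightarrow> 'a::comm_ring_1) list \<Rightarrow> (nat \<Rightarrow> 'a) set" where
  "kerm n H = dual n (set H)"

text \<open>Distance of CSS(C_X, C_Z); the minimum over the empty set is infinity.\<close>
definition css_distance :: "nat \<Rightarrow> (nat \<Rightarrow> 'a::comm_ring_1) set \<Rightarrow> (nat \<Rightarrow> 'a) set \<Rightarrow> enat" where
  "css_distance n CX CZ =
     (INF y \<in> (CZ - dual n CX) \<union> (CX - dual n CZ). enat (hweight n y))"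

definition HX0 :: "nat \<Rightarrow> nat \<Rightarrow> (nat \<Rightarrow> 'a::comm_ring_1) list" where
  "HX0 n r = map (\<lambda>j. \<lambda>i. if r * j \<le> i \<and> i < r * j + r then 1 else 0) [0..<n div r]"

definition HZ0 :: "nat \<Rightarrow> nat \<Rightarrow> (nat \<Rightarrow> 'a::comm_ring_1) list" where
  "HZ0 n r = map (\<lambda>j. \<lambda>i. if i = r * j then - of_nat (r - 1)
                            else if r * j < i \<and> i < r * j + r then 1 else 0) [0..<n div r]"

fun iter_pmf :: "nat \<Rightarrow> ('b \<Rightarrow> 'b pmf) \<Rightarrow> 'b \<Rightarrow> 'b pmf" where
  "iter_pmf 0 f x = return_pmf x"
| "iter_pmf (Suc k) f x = bind_pmf (f x) (iter_pmf k f)"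

definition stepX :: "nat \<Rightarrow> (nat \<Rightarrow> 'a::{comm_ring_1,finite}) list \<times> (nat \<Rightarrow> 'a) list
    \<Rightarrow> ((nat \<Rightarrow> 'a) list \<times> (nat \<Rightarrow> 'a) list) pmf" where
  "stepX n = (\<lambda>(hx, hz). map_pmf (\<lambda>v. (hx @ [v], hz))
                 (pmf_of_set (dual n (row_span hz) - row_span hx)))"

definition stepZ :: "nat \<Rightarrow> (nat \<Rightarrow> 'a::{comm_ring_1,finite}) list \<times> (nat \<Rightarrow> 'a) list
    \<Rightarrow> ((nat \<Rightarrow> 'a) list \<times> (nat \<Rightarrow> 'a) list) pmf" where
  "stepZ n = (\<lambda>(hx, hz). map_pmf (\<lambda>v. (hx, hz @ [v]))
                 (pmf_of_set (dual n (row_span hx) - row_span hz)))"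

definition random_qLRC :: "nat \<Rightarrow> nat \<Rightarrow> nat
    \<Rightarrow> ((nat \<Rightarrow> 'a::{comm_ring_1,finite}) list \<times> (nat \<Rightarrow> 'a) list) pmf" where
  "random_qLRC n r l =
     bind_pmf (iter_pmf l (stepX n) (HX0 n r, HZ0 n r)) (iter_pmf l (stepZ n))"

definition Hq :: "real \<Rightarrow> real \<Rightarrow> real" where
  "Hq q x = x * log q (q - 1) - x * log q x - (1 - x) * log q (1 - x)"

end

theory Submission
  imports Defs
begin

(* A CSS code has distance below \<delta> n only if some nonzero y of weight below \<delta> n lies in
   C_X - C_Z^\<bottom> or in C_Z - C_X^\<bottom>.  If y is orthogonal to the kernel of the
   initial H_Z, it is orthogonal to every later C_Z and cannot lie in C_X - C_Z^\<bottom>; otherwise each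
   of the l rows appended to H_X is uniform on C_Z - rowspan(H_X), where it is orthogonal to y with
   probability at most 1/q, so y lies in C_X with probability at most q^(-l).  The same holds for
   C_Z.  There are fewer than q^(H_q(\<delta>) n) vectors of weight below \<delta> n (compare their
   probabilities under a product distribution), so the union bound gives failure probability below
   2 q^(H_q(\<delta>) n - l).  The second claim uses H_q(\<delta>) \<le> \<delta> + log_q 2 \<le> \<delta> + \<epsilon>/2. *)

section \<open>Probability bounds for iterated random steps\<close>

lemma prob_bind_pmf_le_indicator:
  fixes M :: "'a pmf" and N :: "'a \<Rightarrow> 'b pmf"
  assumes "\<And>x. x \<in> set_pmf M \<Longrightarrow> measure_pmf.prob (N x) X \<le> d * indicator B x" and "0 \<le> d"
  shows "measure_pmf.prob (bind_pmf M N) X \<le> d * measure_pmf.prob M B"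
proof -
  have "emeasure (bind_pmf M N) X = (\<integral>\<^sup>+x. emeasure (N x) X \<partial>M)"
    by simp
  also have "\<dots> \<le> (\<integral>\<^sup>+x. ennreal d * indicator B x \<partial>M)"
  proof (rule nn_integral_mono_AE)
    show "AE x in measure_pmf M. emeasure (N x) X \<le> ennreal d * indicator B x"
      unfolding AE_measure_pmf_iff
    proof
      fix x assume "x \<in> set_pmf M"
      then have "measure_pmf.prob (N x) X \<le> d * indicator B x" by (rule assms(1))
      then show "emeasure (N x) X \<le> ennreal d * indicator B x"
        by (cases "x \<in> B") (auto simp: measure_pmf.emeasure_eq_measure ennreal_leI intro: antisym)
    qed
  qed
  also have "\<dots> = ennreal (d * measure_pmf.prob M B)"
    by (simp add: nn_integral_cmult_indicator measure_pmf.emeasure_eq_measure ennreal_mult assms(2))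
  finally show ?thesis
    by (simp add: measure_pmf.emeasure_eq_measure assms(2))
qed

lemma prob_bind_pmf_le:
  fixes M :: "'a pmf" and N :: "'a \<Rightarrow> 'b pmf"
  assumes "\<And>x. x \<in> set_pmf M \<Longrightarrow> measure_pmf.prob (N x) X \<le> d" and "0 \<le> d"
  shows "measure_pmf.prob (bind_pmf M N) X \<le> d"
  using prob_bind_pmf_le_indicator[of M N X d UNIV] assms by simp

lemma prob_iter_pmf_le_power:
  assumes step: "\<And>k s. I (Suc k) s \<Longrightarrow> measure_pmf.prob (f s) B \<le> c"
    and inv: "\<And>k s s'. I (Suc k) s \<Longrightarrow> s' \<in> set_pmf (f s) \<Longrightarrow> I k s'"
    and absorbing: "\<And>s s'. s' \<in> set_pmf (f s) \<Longrightarrow> s \<notin> B \<Longrightarrow> s' \<notin> B"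
    and "0 \<le> c" and "I k s"
  shows "measure_pmf.prob (iter_pmf k f s) B \<le> c ^ k"
  using \<open>I k s\<close>
proof (induction k arbitrary: s)
  case 0
  then show ?case by simp
next
  case (Suc k)
  have never_back: "set_pmf (iter_pmf j f x) \<inter> B = {}" if "x \<notin> B" for j x
    using that by (induction j arbitrary: x) (auto dest: absorbing)
  have "measure_pmf.prob (bind_pmf (f s) (iter_pmf k f)) B \<le> c ^ k * measure_pmf.prob (f s) B"
  proof (rule prob_bind_pmf_le_indicator)
    fix x assume "x \<in> set_pmf (f s)"
    then show "measure_pmf.prob (iter_pmf k f x) B \<le> c ^ k * indicator B x"
      using Suc.IH[OF inv[OF Suc.prems]] measure_pmf_zero_iff[THEN iffD2, OF never_back]
      by (cases "x \<in> B") simp_all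
  qed (use \<open>0 \<le> c\<close> in simp)
  also have "\<dots> \<le> c ^ k * c"
    using step[OF Suc.prems] \<open>0 \<le> c\<close> by (simp add: mult_left_mono)
  finally show ?case by (simp add: mult.commute)
qed

section \<open>Subspaces of F_q^n and counting\<close>

lemma dotp_add_left: "dotp n (\<lambda>i. x i + z i) y = dotp n x y + dotp n z y"
  by (simp add: dotp_def algebra_simps sum.distrib)

lemma dotp_diff_left: "dotp n (\<lambda>i. x i - z i) y = dotp n x y - dotp n z y"
  by (simp add: dotp_def algebra_simps sum_subtractf)

lemma dotp_scale_left: "dotp n (\<lambda>i. c * x i) y = c * dotp n x y"
  by (simp add: dotp_def algebra_simps sum_distrib_left)

lemma dotp_zero_left [simp]: "dotp n (\<lambda>_. 0) y = 0"
  by (simp add: dotp_def)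

lemma dotp_commute: "dotp n x y = dotp n y x"
  by (simp add: dotp_def mult.commute)

definition is_subspace :: "(nat \<Rightarrow> 'a::comm_ring_1) set \<Rightarrow> bool" where
  "is_subspace S \<longleftrightarrow> (\<lambda>_. 0) \<in> S \<and> (\<forall>x\<in>S. \<forall>y\<in>S. (\<lambda>i. x i + y i) \<in> S) \<and> (\<forall>c. \<forall>x\<in>S. (\<lambda>i. c * x i) \<in> S)"

lemma is_subspace_add_scale: "is_subspace S \<Longrightarrow> x \<in> S \<Longrightarrow> z \<in> S \<Longrightarrow> (\<lambda>i. x i + c * z i) \<in> S"
  by (simp add: is_subspace_def)

lemma is_subspace_diff_scale: "is_subspace S \<Longrightarrow> x \<in> S \<Longrightarrow> z \<in> S \<Longrightarrow> (\<lambda>i. x i - c * z i) \<in> S"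
  using is_subspace_add_scale[of S x z "- c"] by simp

lemma is_subspace_dual: "is_subspace (dual n T)"
  by (auto simp: is_subspace_def dual_def vecs_def dotp_add_left dotp_scale_left)

lemma is_subspace_Int: "is_subspace S \<Longrightarrow> is_subspace T \<Longrightarrow> is_subspace (S \<inter> T)"
  by (auto simp: is_subspace_def)

lemma row_spanI: "v = (\<lambda>i. \<Sum>j<length H. c j * (H ! j) i) \<Longrightarrow> v \<in> row_span H"
  by (auto simp: row_span_def)

lemma row_spanE:
  assumes "v \<in> row_span H"
  obtains c where "v = (\<lambda>i. \<Sum>j<length H. c j * (H ! j) i)"
  using assms by (auto simp: row_span_def)

lemma is_subspace_row_span: "is_subspace (row_span H)"
  unfolding is_subspace_def
proof (safe elim!: row_spanE)
  show "(\<lambda>_. 0) \<in> row_span H"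
    by (rule row_spanI[where c = "\<lambda>_. 0"]) simp
  show "(\<lambda>i. (\<Sum>j<length H. c j * (H ! j) i) + (\<Sum>j<length H. c' j * (H ! j) i)) \<in> row_span H" for c c'
    by (rule row_spanI[where c = "\<lambda>j. c j + c' j"]) (simp add: algebra_simps sum.distrib)
  show "(\<lambda>i. a * (\<Sum>j<length H. c j * (H ! j) i)) \<in> row_span H" for a c
    by (rule row_spanI[where c = "\<lambda>j. a * c j"]) (simp add: algebra_simps sum_distrib_left)
qed

lemma row_span_eq_image: "row_span H = (\<lambda>c i. \<Sum>j<length H. c j * (H ! j) i) ` vecs (length H)"
proof
  show "row_span H \<subseteq> (\<lambda>c i. \<Sum>j<length H. c j * (H ! j) i) ` vecs (length H)"
  proof
    fix v assume "v \<in> row_span H"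
    then obtain c where v: "v = (\<lambda>i. \<Sum>j<length H. c j * (H ! j) i)"
      by (rule row_spanE)
    let ?c = "\<lambda>j. if j < length H then c j else 0"
    have "v = (\<lambda>i. \<Sum>j<length H. ?c j * (H ! j) i)" and "?c \<in> vecs (length H)"
      by (simp_all add: v vecs_def)
    then show "v \<in> (\<lambda>c i. \<Sum>j<length H. c j * (H ! j) i) ` vecs (length H)"
      by (rule image_eqI)
  qed
qed (auto simp: row_span_def)

lemma vecs_eq_PiE_dflt: "vecs n = PiE_dflt {..<n} 0 (\<lambda>_. UNIV)"
  by (auto simp: vecs_def PiE_dflt_def not_less)

lemma finite_vecs [simp]: "finite (vecs n :: (nat \<Rightarrow> 'a::{zero,finite}) set)"
  by (auto simp: vecs_eq_PiE_dflt)

lemma card_vecs: "card (vecs n :: (nat \<Rightarrow> 'a::{zero,finite}) set) = CARD('a) ^ n"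
  by (simp add: vecs_eq_PiE_dflt card_PiE_dflt)

lemma sum_prod_vecs:
  fixes g :: "'a::{zero,finite} \<Rightarrow> 'b::comm_semiring_1"
  shows "(\<Sum>y\<in>vecs n. \<Prod>i<n. g (y i)) = (\<Sum>a\<in>UNIV. g a) ^ n"
proof -
  have inj: "inj_on (\<lambda>y. restrict y {..<n}) (vecs n :: (nat \<Rightarrow> 'a) set)"
  proof (rule inj_onI)
    fix y y' :: "nat \<Rightarrow> 'a"
    assume "y \<in> vecs n" "y' \<in> vecs n" and eq: "restrict y {..<n} = restrict y' {..<n}"
    show "y = y'"
    proof
      fix i show "y i = y' i"
        using fun_cong[OF eq, of i] \<open>y \<in> vecs n\<close> \<open>y' \<in> vecs n\<close> by (cases "i < n") (auto simp: vecs_def)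
    qed
  qed
  have "(\<Sum>a\<in>UNIV. g a) ^ n = (\<Prod>i<n. \<Sum>a\<in>UNIV. g a)"
    by simp
  also have "\<dots> = (\<Sum>h\<in>PiE {..<n} (\<lambda>_. UNIV). \<Prod>i<n. g (h i))"
    by (rule prod_sum_PiE) auto
  also have "PiE {..<n} (\<lambda>_. UNIV) = (\<lambda>y. restrict y {..<n}) ` vecs n"
    by (simp add: vecs_eq_PiE_dflt restrict_PiE_dflt)
  also have "(\<Sum>h\<in>(\<lambda>y. restrict y {..<n}) ` vecs n. \<Prod>i<n. g (h i))
      = (\<Sum>y\<in>vecs n. \<Prod>i<n. g (restrict y {..<n} i))"
    by (simp add: sum.reindex[OF inj])
  finally show ?thesis
    by simp
qed

lemma two_le_card_field: "2 \<le> CARD('a::{field,finite})"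
proof -
  have "card {0::'a, 1} \<le> CARD('a)" by (rule card_mono) auto
  then show ?thesis by simp
qed

lemma card_subspace_eq_mult_card_orth:
  fixes S :: "(nat \<Rightarrow> 'a::{field,finite}) set"
  assumes S: "is_subspace S" and a: "a \<in> S" "dotp n a y \<noteq> 0"
  shows "card S = CARD('a) * card {x\<in>S. dotp n x y = 0}"
proof -
  define u where "u = (\<lambda>i. inverse (dotp n a y) * a i)"
  have u: "u \<in> S" "dotp n u y = 1"
    using S a unfolding u_def by (auto simp: is_subspace_def dotp_scale_left)
  let ?K = "{x\<in>S. dotp n x y = 0}"
  have "bij_betw (\<lambda>(k, c). \<lambda>i. k i + c * u i) (?K \<times> UNIV) S"
    by (rule bij_betw_byWitness[where f' = "\<lambda>x. (\<lambda>i. x i - dotp n x y * u i, dotp n x y)"])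
      (use S u in \<open>auto simp: is_subspace_add_scale is_subspace_diff_scale
        dotp_add_left dotp_diff_left dotp_scale_left\<close>)
  then show ?thesis
    using bij_betw_same_card by (fastforce simp: card_cartesian_product mult.commute)
qed

lemma card_subspace_le_mult_card_orth:
  fixes S :: "(nat \<Rightarrow> 'a::{field,finite}) set"
  assumes "is_subspace S"
  shows "card S \<le> CARD('a) * card {x\<in>S. dotp n x y = 0}"
proof (cases "\<exists>s\<in>S. dotp n s y \<noteq> 0")
  case True
  then show ?thesis
    using card_subspace_eq_mult_card_orth[OF assms] by auto
next
  case False
  then have "{x\<in>S. dotp n x y = 0} = S" by auto
  then show ?thesis using two_le_card_field[where 'a='a] by simp
qed

lemma kerm_Cons: "kerm n (h # H) = {x \<in> kerm n H. dotp n x h = 0}"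
  by (auto simp: kerm_def dual_def)

lemma kerm_append: "kerm n (H @ H') = kerm n H \<inter> kerm n H'"
  by (auto simp: kerm_def dual_def)

lemma kerm_subset_vecs: "kerm n H \<subseteq> vecs n"
  by (auto simp: kerm_def dual_def)

lemma zero_in_dual: "(\<lambda>_. 0) \<in> dual n S"
  by (simp add: dual_def vecs_def dotp_def)

lemma finite_dual [simp]: "finite (dual n (T :: (nat \<Rightarrow> 'a::{comm_ring_1,finite}) set))"
  by (rule finite_subset[OF _ finite_vecs]) (auto simp: dual_def)

lemma is_subspace_kerm: "is_subspace (kerm n H)"
  unfolding kerm_def by (rule is_subspace_dual)

lemma finite_kerm [simp]: "finite (kerm n (H :: (nat \<Rightarrow> 'a::{comm_ring_1,finite}) list))"
  by (simp add: kerm_def)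

lemma power_le_card_kerm:
  fixes H :: "(nat \<Rightarrow> 'a::{field,finite}) list"
  shows "CARD('a) ^ n \<le> CARD('a) ^ length H * card (kerm n H)"
proof (induction H)
  case Nil
  have "kerm n [] = (vecs n :: (nat \<Rightarrow> 'a) set)" by (simp add: kerm_def dual_def)
  then show ?case by (simp add: card_vecs)
next
  case (Cons h H)
  have "card (kerm n H) \<le> CARD('a) * card {x \<in> kerm n H. dotp n x h = 0}"
    unfolding kerm_def by (rule card_subspace_le_mult_card_orth[OF is_subspace_dual])
  then have "card (kerm n H) \<le> CARD('a) * card (kerm n (h # H))"
    by (simp only: kerm_Cons)
  then have "CARD('a) ^ length H * card (kerm n H) \<le> CARD('a) ^ length (h # H) * card (kerm n (h # H))"
    by (simp add: mult.assoc)
  with Cons.IH show ?case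
    by linarith
qed

lemma set_subset_row_span: "set H \<subseteq> row_span H"
proof
  fix h assume "h \<in> set H"
  then obtain j where j: "j < length H" "h = H ! j" by (auto simp: in_set_conv_nth)
  have "{..<length H} \<inter> {j'. j' = j} = {j}"
    using j(1) by auto
  then have "h = (\<lambda>i. \<Sum>j'<length H. of_bool (j' = j) * (H ! j') i)"
    using j(2) by simp
  then show "h \<in> row_span H"
    by (rule row_spanI)
qed

lemma dual_row_span: "dual n (row_span H) = kerm n H"
proof
  show "dual n (row_span H) \<subseteq> kerm n H"
    using set_subset_row_span[of H] by (auto simp: kerm_def dual_def)
next
  have "dotp n y (\<lambda>i. \<Sum>j<length H. c j * (H ! j) i) = (\<Sum>j<length H. c j * dotp n y (H ! j))" for y c
    unfolding dotp_def by (simp add: sum_distrib_left mult.left_commute sum.swap[of _ "{..<n}"])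
  then show "kerm n H \<subseteq> dual n (row_span H)"
    by (auto simp: kerm_def dual_def elim!: row_spanE)
qed

lemma finite_row_span [simp]: "finite (row_span (H :: (nat \<Rightarrow> 'a::{comm_ring_1,finite}) list))"
  by (simp add: row_span_eq_image)

lemma card_row_span_le: "card (row_span (H :: (nat \<Rightarrow> 'a::{comm_ring_1,finite}) list)) \<le> CARD('a) ^ length H"
  unfolding row_span_eq_image card_vecs[symmetric] by (rule card_image_le) simp

lemma kerm_diff_row_span_nonempty:
  fixes hx hz :: "(nat \<Rightarrow> 'a::{field,finite}) list"
  assumes "length hx + length hz < n"
  shows "kerm n hz - row_span hx \<noteq> {}"
proof
  assume "kerm n hz - row_span hx = {}"
  then have "card (kerm n hz) \<le> card (row_span hx)"
    by (intro card_mono) auto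
  then have "CARD('a) ^ n \<le> CARD('a) ^ length hz * CARD('a) ^ length hx"
    using power_le_card_kerm[of n hz] card_row_span_le[of hx] by (meson le_trans mult_le_mono2)
  also have "\<dots> < CARD('a) ^ n"
    using two_le_card_field[where 'a='a] assms
    by (simp add: power_add[symmetric] add.commute power_strict_increasing)
  finally show False by simp
qed

text \<open>A has q times as many vectors as its slice orthogonal to y, while A \<inter> R has at most q times as many.\<close>
lemma prob_pmf_of_set_diff_orth_le:
  fixes A R :: "(nat \<Rightarrow> 'a::{field,finite}) set"
  assumes A: "is_subspace A" "finite A" and R: "is_subspace R"
    and ne: "A - R \<noteq> {}" and a: "a \<in> A" "dotp n a y \<noteq> 0"
  shows "measure_pmf.prob (pmf_of_set (A - R)) {v. dotp n v y = 0} \<le> 1 / real CARD('a)"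
proof -
  let ?Q = "CARD('a)"
  define K where "K = {x\<in>A. dotp n x y = 0}"
  have card_A: "card A = ?Q * card K"
    unfolding K_def by (rule card_subspace_eq_mult_card_orth[OF A(1) a])
  have "card (A \<inter> R) \<le> ?Q * card {x\<in>A \<inter> R. dotp n x y = 0}"
    by (rule card_subspace_le_mult_card_orth[OF is_subspace_Int[OF A(1) R]])
  also have "{x\<in>A \<inter> R. dotp n x y = 0} = K \<inter> R"
    unfolding K_def by auto
  finally have card_AR: "card (A \<inter> R) \<le> ?Q * card (K \<inter> R)" .
  have fin_K: "finite K"
    using A(2) unfolding K_def by simp
  have "?Q * card (K - R) = ?Q * card K - ?Q * card (K \<inter> R)"
    using fin_K by (simp add: card_Diff_subset_Int diff_mult_distrib2)
  also have "\<dots> \<le> card (A - R)"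
    using A(2) card_A card_AR by (simp add: card_Diff_subset_Int)
  finally have "real ?Q * card (K - R) \<le> card (A - R)"
    by (metis of_nat_le_iff of_nat_mult)
  moreover have "(A - R) \<inter> {v. dotp n v y = 0} = K - R"
    unfolding K_def by auto
  moreover have "0 < card (A - R)"
    using ne A(2) by (simp add: card_gt_0_iff)
  ultimately show ?thesis
    using ne A(2) by (simp add: measure_pmf_of_set field_simps)
qed

section \<open>The random qLRC process\<close>

lemma length_HX0 [simp]: "length (HX0 n r) = n div r"
  by (simp add: HX0_def)

lemma length_HZ0 [simp]: "length (HZ0 n r) = n div r"
  by (simp add: HZ0_def)

lemma stepZ_eq_swap: "stepZ n s = map_pmf prod.swap (stepX n (prod.swap s))"
  by (cases s) (simp add: stepX_def stepZ_def pmf.map_comp o_def)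

lemma iter_stepZ_eq_swap:
  "iter_pmf k (stepZ n) s = map_pmf prod.swap (iter_pmf k (stepX n) (prod.swap s))"
proof (induction k arbitrary: s)
  case 0
  then show ?case by simp
next
  case (Suc k)
  then show ?case by (simp add: stepZ_eq_swap map_bind_pmf bind_map_pmf)
qed

lemma set_pmf_iter_stepX:
  "s' \<in> set_pmf (iter_pmf k (stepX n) s) \<Longrightarrow> \<exists>vs. length vs = k \<and> s' = (fst s @ vs, snd s)"
proof (induction k arbitrary: s)
  case 0
  then show ?case by simp
next
  case (Suc k)
  then obtain v where "s' \<in> set_pmf (iter_pmf k (stepX n) (fst s @ [v], snd s))"
    by (cases s) (auto simp: stepX_def)
  then obtain vs where "length vs = k" "s' = (fst s @ [v] @ vs, snd s)"
    using Suc.IH by fastforce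
  then show ?case
    by (intro exI[of _ "v # vs"]) simp
qed

lemma set_pmf_iter_stepZ:
  "s' \<in> set_pmf (iter_pmf k (stepZ n) s) \<Longrightarrow> \<exists>vs. length vs = k \<and> s' = (fst s, snd s @ vs)"
  using set_pmf_iter_stepX[of "prod.swap s'" k n "prod.swap s"]
  by (auto simp: iter_stepZ_eq_swap)

lemma set_pmf_random_qLRC:
  "s \<in> set_pmf (random_qLRC n r l) \<Longrightarrow>
     \<exists>vs ws. length vs = l \<and> length ws = l \<and> s = (HX0 n r @ vs, HZ0 n r @ ws)"
  by (fastforce simp: random_qLRC_def dest!: set_pmf_iter_stepX set_pmf_iter_stepZ)

lemma map_fst_random_qLRC:
  "map_pmf fst (random_qLRC n r l) = map_pmf fst (iter_pmf l (stepX n) (HX0 n r, HZ0 n r))"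
proof -
  have "map_pmf fst (iter_pmf l (stepZ n) s) = return_pmf (fst s)" for s :: "(nat \<Rightarrow> 'a) list \<times> _"
    by (auto simp: map_pmf_eq_return_pmf_iff dest: set_pmf_iter_stepZ)
  then show ?thesis
    unfolding random_qLRC_def map_bind_pmf by (simp add: map_pmf_def)
qed

lemma prob_iter_stepX_kerm_le:
  fixes y :: "nat \<Rightarrow> 'a::{field,finite}"
  assumes y: "y \<in> vecs n" "y \<notin> dual n (kerm n hz)" and len: "length hx + length hz + k \<le> n"
  shows "measure_pmf.prob (iter_pmf k (stepX n) (hx, hz)) {s. y \<in> kerm n (fst s)}
           \<le> (1 / real CARD('a)) ^ k"
proof -
  obtain a where a: "a \<in> kerm n hz" "dotp n a y \<noteq> 0"
    using y by (auto simp: dual_def dotp_commute)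
  let ?I = "\<lambda>k s. snd s = hz \<and> length (fst s) + length hz + k \<le> n"
  show ?thesis
  proof (rule prob_iter_pmf_le_power[where I = ?I])
    fix k and s :: "(nat \<Rightarrow> 'a) list \<times> (nat \<Rightarrow> 'a) list"
    assume "?I (Suc k) s"
    then obtain hx' where s: "s = (hx', hz)" and len': "length hx' + length hz < n"
      by (cases s) auto
    have "measure_pmf.prob (stepX n s) {s. y \<in> kerm n (fst s)}
        = measure_pmf.prob (pmf_of_set (kerm n hz - row_span hx')) {v. y \<in> kerm n (hx' @ [v])}"
      by (simp add: s stepX_def dual_row_span)
    also have "\<dots> \<le> measure_pmf.prob (pmf_of_set (kerm n hz - row_span hx')) {v. dotp n v y = 0}"
      by (rule measure_pmf.finite_measure_mono) (auto simp: kerm_append kerm_def dual_def dotp_commute)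
    also have "\<dots> \<le> 1 / real CARD('a)"
      by (rule prob_pmf_of_set_diff_orth_le[OF is_subspace_kerm finite_kerm is_subspace_row_span
            kerm_diff_row_span_nonempty[OF len'] a])
    finally show "measure_pmf.prob (stepX n s) {s. y \<in> kerm n (fst s)} \<le> 1 / real CARD('a)" .
  qed (use len in \<open>auto simp: stepX_def kerm_append\<close>)
qed

lemma prob_iter_stepZ_kerm_le:
  fixes y :: "nat \<Rightarrow> 'a::{field,finite}"
  assumes y: "y \<in> vecs n" "y \<notin> dual n (kerm n hx)" and len: "length hx + length hz + k \<le> n"
  shows "measure_pmf.prob (iter_pmf k (stepZ n) (hx, hz)) {s. y \<in> kerm n (snd s)}
           \<le> (1 / real CARD('a)) ^ k"
proof -
  have "length hz + length hx + k \<le> n"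
    using len by simp
  with y show ?thesis
    using prob_iter_stepX_kerm_le by (simp add: iter_stepZ_eq_swap)
qed

lemma prob_qLRC_X_error_le:
  fixes y :: "nat \<Rightarrow> 'a::{field,finite}"
  assumes y: "y \<in> vecs n" and len: "2 * (n div r) + l \<le> n"
  shows "measure_pmf.prob (random_qLRC n r l) {s. y \<in> kerm n (fst s) - dual n (kerm n (snd s))}
           \<le> (1 / real CARD('a)) ^ l"
proof (cases "y \<in> dual n (kerm n (HZ0 n r))")
  case True
  then have "set_pmf (random_qLRC n r l) \<inter> {s. y \<in> kerm n (fst s) - dual n (kerm n (snd s))} = {}"
    by (fastforce simp: kerm_append dual_def dest!: set_pmf_random_qLRC)
  then show ?thesis
    by (simp add: measure_pmf_zero_iff[THEN iffD2])
next
  case False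
  let ?M = "random_qLRC n r l :: ((nat \<Rightarrow> 'a) list \<times> (nat \<Rightarrow> 'a) list) pmf"
  have "measure_pmf.prob ?M {s. y \<in> kerm n (fst s) - dual n (kerm n (snd s))}
      \<le> measure_pmf.prob ?M (fst -` {hx. y \<in> kerm n hx})"
    by (rule measure_pmf.finite_measure_mono) auto
  also have "\<dots> = measure_pmf.prob (map_pmf fst ?M) {hx. y \<in> kerm n hx}"
    by simp
  also have "\<dots> = measure_pmf.prob (iter_pmf l (stepX n) (HX0 n r, HZ0 n r)) {s. y \<in> kerm n (fst s)}"
    by (simp add: map_fst_random_qLRC)
  also have "\<dots> \<le> (1 / real CARD('a)) ^ l"
    by (rule prob_iter_stepX_kerm_le) (use y False len in simp_all)
  finally show ?thesis .
qed

lemma prob_qLRC_Z_error_le: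
  fixes y :: "nat \<Rightarrow> 'a::{field,finite}"
  assumes y: "y \<in> vecs n" and len: "2 * (n div r) + 2 * l \<le> n"
  shows "measure_pmf.prob (random_qLRC n r l) {s. y \<in> kerm n (snd s) - dual n (kerm n (fst s))}
           \<le> (1 / real CARD('a)) ^ l"
  unfolding random_qLRC_def
proof (rule prob_bind_pmf_le)
  let ?E = "{s. y \<in> kerm n (snd s) - dual n (kerm n (fst s))}"
  fix s :: "(nat \<Rightarrow> 'a) list \<times> (nat \<Rightarrow> 'a) list"
  assume "s \<in> set_pmf (iter_pmf l (stepX n) (HX0 n r, HZ0 n r))"
  then obtain vs where s: "s = (HX0 n r @ vs, HZ0 n r)" "length vs = l"
    by (auto dest: set_pmf_iter_stepX)
  show "measure_pmf.prob (iter_pmf l (stepZ n) s) ?E \<le> (1 / real CARD('a)) ^ l"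
  proof (cases "y \<in> dual n (kerm n (fst s))")
    case True
    then have "set_pmf (iter_pmf l (stepZ n) s) \<inter> ?E = {}"
      by (auto dest!: set_pmf_iter_stepZ)
    then show ?thesis
      by (simp add: measure_pmf_zero_iff[THEN iffD2])
  next
    case False
    have "measure_pmf.prob (iter_pmf l (stepZ n) s) ?E
        \<le> measure_pmf.prob (iter_pmf l (stepZ n) s) {s. y \<in> kerm n (snd s)}"
      by (rule measure_pmf.finite_measure_mono) auto
    also have "\<dots> \<le> (1 / real CARD('a)) ^ l"
      unfolding s(1) by (rule prob_iter_stepZ_kerm_le) (use y False s len in simp_all)
    finally show ?thesis .
  qed
qed simp

section \<open>Counting low-weight vectors\<close>

definition low_weight_vecs :: "nat \<Rightarrow> real \<Rightarrow> (nat \<Rightarrow> 'a::zero) set" where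
  "low_weight_vecs n d = {y \<in> vecs n. y \<noteq> (\<lambda>_. 0) \<and> real (hweight n y) < d}"

lemma hweight_le: "hweight n y \<le> n"
  unfolding hweight_def by (rule order_trans[OF card_mono[of "{..<n}"]]) auto

lemma prod_if_zero_eq_hweight:
  fixes y :: "nat \<Rightarrow> 'a::zero" and a b :: "'b::comm_monoid_mult"
  shows "(\<Prod>i<n. if y i = 0 then a else b) = a ^ (n - hweight n y) * b ^ hweight n y"
proof -
  have "{..<n} \<inter> - {i. y i = 0} = {i. i < n \<and> y i \<noteq> 0}"
    by auto
  moreover have "{..<n} \<inter> {i. y i = 0} = {..<n} - {i. i < n \<and> y i \<noteq> 0}"
    by auto
  moreover have "card ({..<n} - {i. i < n \<and> y i \<noteq> 0}) = n - hweight n y"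
    unfolding hweight_def by (subst card_Diff_subset) auto
  ultimately show ?thesis
    by (simp add: prod.If_cases hweight_def)
qed

lemma Hq_mult_ln:
  "1 < q \<Longrightarrow> Hq q \<delta> * ln q = \<delta> * ln (q - 1) - \<delta> * ln \<delta> - (1 - \<delta>) * ln (1 - \<delta>)"
  by (simp add: Hq_def log_def field_simps)

text \<open>The right-hand side is the probability of a word of weight w when each coordinate is
  independently 0 with probability 1 - \<delta> and each nonzero symbol with probability \<delta>/(q - 1).\<close>
lemma powr_minus_Hq_le:
  fixes q \<delta> :: real and n w :: nat
  assumes q: "1 < q" and \<delta>: "0 < \<delta>" "\<delta> \<le> 1 - 1 / q" and w: "w \<le> n" "real w \<le> \<delta> * real n"
  shows "q powr (- Hq q \<delta> * real n) \<le> (1 - \<delta>) ^ (n - w) * (\<delta> / (q - 1)) ^ w"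
proof -
  define a where "a = 1 - \<delta>"
  define b where "b = \<delta> / (q - 1)"
  have "0 < 1 / q" using q by simp
  then have a_pos: "0 < a" using \<delta> unfolding a_def by linarith
  have b_pos: "0 < b" using q \<delta> by (simp add: b_def)
  have "b \<le> a"
    using q \<delta> by (simp add: a_def b_def field_simps)
  then have "0 \<le> (\<delta> * real n - real w) * (ln a - ln b)"
    using a_pos b_pos w by (intro mult_nonneg_nonneg) auto
  then have weight: "real n * (\<delta> * ln b + (1 - \<delta>) * ln a) \<le> real (n - w) * ln a + real w * ln b"
    using w by (simp add: algebra_simps)
  have ln_b: "ln b = ln \<delta> - ln (q - 1)"
    using q \<delta> by (simp add: b_def ln_div)
  have "ln (q powr (- Hq q \<delta> * real n)) = - real n * (Hq q \<delta> * ln q)"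
    using q by (simp add: mult_ac)
  also have "\<dots> = real n * (\<delta> * ln b + (1 - \<delta>) * ln a)"
    unfolding Hq_mult_ln[OF q] ln_b a_def by (simp add: algebra_simps)
  also note weight
  also have "real (n - w) * ln a + real w * ln b = ln (a ^ (n - w) * b ^ w)"
    using a_pos b_pos by (simp add: ln_mult ln_realpow)
  finally have "ln (q powr (- Hq q \<delta> * real n)) \<le> ln (a ^ (n - w) * b ^ w)" .
  then show ?thesis
    using q a_pos b_pos unfolding a_def b_def by (subst (asm) ln_le_cancel_iff) auto
qed

lemma card_low_weight_vecs_less:
  fixes \<delta> :: real
  assumes \<delta>: "0 < \<delta>" "\<delta> \<le> 1 - 1 / real CARD('a::{field,finite})"
  shows "real (card (low_weight_vecs n (\<delta> * real n) :: (nat \<Rightarrow> 'a) set))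
           < real CARD('a) powr (Hq (real CARD('a)) \<delta> * real n)"
proof -
  define q where "q = real CARD('a)"
  define Y where "Y = (low_weight_vecs n (\<delta> * real n) :: (nat \<Rightarrow> 'a) set)"
  define g where "g = (\<lambda>x::'a. if x = 0 then 1 - \<delta> else \<delta> / (q - 1))"
  define p where "p = (\<lambda>y::nat \<Rightarrow> 'a. \<Prod>i<n. g (y i))"
  have q: "2 \<le> q"
    unfolding q_def using two_le_card_field[where 'a='a] by simp
  have "0 < 1 / q" using q by simp
  then have "\<delta> < 1"
    using \<delta> unfolding q_def by linarith
  then have g_pos: "0 < g x" for x
    using \<delta> q by (simp add: g_def)
  have "(\<Sum>x\<in>UNIV. g x) = (1 - \<delta>) + real (CARD('a) - 1) * (\<delta> / (q - 1))"
    by (simp add: g_def sum.If_cases Compl_eq_Diff_UNIV card_Diff_singleton)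
  also have "\<dots> = 1"
    using q by (simp add: q_def)
  finally have "(\<Sum>y\<in>vecs n. p y) = 1"
    unfolding p_def by (simp add: sum_prod_vecs)
  moreover have "(\<lambda>_. 0) \<in> (vecs n :: (nat \<Rightarrow> 'a) set)"
    by (simp add: vecs_def)
  ultimately have "(\<Sum>y\<in>vecs n - {\<lambda>_. 0}. p y) = 1 - p (\<lambda>_. 0)"
    by (simp add: sum_diff1)
  also have "\<dots> < 1"
    using g_pos by (simp add: p_def prod_pos)
  finally have "(\<Sum>y\<in>vecs n - {\<lambda>_. 0}. p y) < 1" .
  moreover have "(\<Sum>y\<in>Y. p y) \<le> (\<Sum>y\<in>vecs n - {\<lambda>_. 0}. p y)"
    using g_pos by (intro sum_mono2) (auto simp: Y_def low_weight_vecs_def p_def prod_pos less_imp_le)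
  moreover have "q powr (- Hq q \<delta> * real n) \<le> p y" if "y \<in> Y" for y
    using that powr_minus_Hq_le[of q \<delta> "hweight n y" n] \<delta> q hweight_le[of n y]
    by (simp add: Y_def low_weight_vecs_def p_def g_def prod_if_zero_eq_hweight q_def)
  then have "real (card Y) * q powr (- Hq q \<delta> * real n) \<le> (\<Sum>y\<in>Y. p y)"
    using sum_mono[of Y "\<lambda>_. q powr (- Hq q \<delta> * real n)" p] by simp
  ultimately have "real (card Y) * q powr (- Hq q \<delta> * real n) < 1"
    by linarith
  then show ?thesis
    using q by (simp add: Y_def q_def powr_minus field_simps)
qed

lemma binary_entropy_le_ln2:
  fixes \<delta> :: real
  assumes "0 < \<delta>" "\<delta> < 1"
  shows "- \<delta> * ln \<delta> - (1 - \<delta>) * ln (1 - \<delta>) \<le> ln 2"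
proof -
  have ln_half: "ln (1 / (2 * t)) = - ln 2 - ln t" if "0 < t" for t :: real
    using that by (simp add: ln_div ln_mult)
  have "\<delta> * ln (1 / (2 * \<delta>)) + (1 - \<delta>) * ln (1 / (2 * (1 - \<delta>)))
      \<le> \<delta> * (1 / (2 * \<delta>) - 1) + (1 - \<delta>) * (1 / (2 * (1 - \<delta>)) - 1)"
    using assms by (intro add_mono mult_left_mono ln_le_minus_one) auto
  also have "\<dots> = 0"
    using assms by (simp add: field_simps)
  finally have "\<delta> * (- ln 2 - ln \<delta>) + (1 - \<delta>) * (- ln 2 - ln (1 - \<delta>)) \<le> 0"
    using assms by (simp only: ln_half diff_gt_0_iff_gt)
  then show ?thesis
    by (simp add: algebra_simps)
qed

lemma Hq_le_add_half:
  fixes q \<delta> \<epsilon> :: real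
  assumes \<delta>: "0 < \<delta>" "\<delta> < 1" and \<epsilon>: "0 < \<epsilon>" and q: "2 powr (2 / \<epsilon>) \<le> q"
  shows "Hq q \<delta> \<le> \<delta> + \<epsilon> / 2"
proof -
  have "1 < 2 powr (2 / \<epsilon>)"
    using \<epsilon> by simp
  then have q1: "1 < q"
    using q by linarith
  have "ln (2 powr (2 / \<epsilon>)) \<le> ln q"
    using q q1 by (subst ln_le_cancel_iff) auto
  then have "2 / \<epsilon> * ln 2 \<le> ln q"
    by simp
  then have "ln 2 \<le> \<epsilon> / 2 * ln q"
    using \<epsilon> by (simp add: field_simps)
  have "Hq q \<delta> * ln q = \<delta> * ln (q - 1) + (- \<delta> * ln \<delta> - (1 - \<delta>) * ln (1 - \<delta>))"
    using Hq_mult_ln[OF q1, of \<delta>] by simp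
  also have "\<dots> \<le> \<delta> * ln q + ln 2"
    using q1 \<delta> by (intro add_mono mult_left_mono binary_entropy_le_ln2) auto
  also have "\<dots> \<le> (\<delta> + \<epsilon> / 2) * ln q"
    using \<open>ln 2 \<le> \<epsilon> / 2 * ln q\<close> by (simp add: algebra_simps)
  finally show ?thesis
    using q1 by simp
qed

section \<open>Distance of the random qLRC\<close>

lemma ereal_le_css_distance:
  assumes "\<And>y. y \<in> (CZ - dual n CX) \<union> (CX - dual n CZ) \<Longrightarrow> d \<le> real (hweight n y)"
  shows "ereal d \<le> ereal_of_enat (css_distance n CX CZ)"
proof -
  have "enat (nat \<lceil>d\<rceil>) \<le> css_distance n CX CZ"
    unfolding css_distance_def by (rule INF_greatest) (simp add: assms nat_le_iff ceiling_le_iff)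
  have "ereal d \<le> ereal (real (nat \<lceil>d\<rceil>))"
    by simp linarith
  also have "\<dots> = ereal_of_enat (enat (nat \<lceil>d\<rceil>))"
    by simp
  also have "\<dots> \<le> ereal_of_enat (css_distance n CX CZ)"
    using \<open>enat (nat \<lceil>d\<rceil>) \<le> css_distance n CX CZ\<close> by (simp only: ereal_of_enat_le_iff)
  finally show ?thesis .
qed

definition qLRC_error :: "nat \<Rightarrow> (nat \<Rightarrow> 'a::comm_ring_1) \<Rightarrow> ((nat \<Rightarrow> 'a) list \<times> (nat \<Rightarrow> 'a) list) set" where
  "qLRC_error n y = {(hx, hz). y \<in> (kerm n hz - dual n (kerm n hx)) \<union> (kerm n hx - dual n (kerm n hz))}"

lemma ereal_le_css_distance_kerm:
  assumes "(hx, hz) \<notin> (\<Union>y\<in>low_weight_vecs n d. qLRC_error n y)"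
  shows "ereal d \<le> ereal_of_enat (css_distance n (kerm n hx) (kerm n hz))"
proof (rule ereal_le_css_distance)
  fix y assume y: "y \<in> (kerm n hz - dual n (kerm n hx)) \<union> (kerm n hx - dual n (kerm n hz))"
  show "d \<le> real (hweight n y)"
  proof (rule ccontr)
    assume "\<not> d \<le> real (hweight n y)"
    moreover have "y \<in> vecs n" "y \<noteq> (\<lambda>_. 0)"
      using y kerm_subset_vecs zero_in_dual by blast+
    ultimately have "y \<in> low_weight_vecs n d"
      by (simp add: low_weight_vecs_def)
    then show False
      using assms y by (auto simp: qLRC_error_def)
  qed
qed

lemma prob_qLRC_error_le:
  fixes y :: "nat \<Rightarrow> 'a::{field,finite}"
  assumes y: "y \<in> vecs n" and len: "2 * (n div r) + 2 * l \<le> n"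
  shows "measure_pmf.prob (random_qLRC n r l) (qLRC_error n y) \<le> 2 * (1 / real CARD('a)) ^ l"
proof -
  have "qLRC_error n y = {s. y \<in> kerm n (fst s) - dual n (kerm n (snd s))}
                          \<union> {s. y \<in> kerm n (snd s) - dual n (kerm n (fst s))}"
    by (auto simp: qLRC_error_def)
  then have "measure_pmf.prob (random_qLRC n r l) (qLRC_error n y)
      \<le> measure_pmf.prob (random_qLRC n r l) {s. y \<in> kerm n (fst s) - dual n (kerm n (snd s))}
        + measure_pmf.prob (random_qLRC n r l) {s. y \<in> kerm n (snd s) - dual n (kerm n (fst s))}"
    by (simp add: measure_Un_le)
  also have "\<dots> \<le> (1 / real CARD('a)) ^ l + (1 / real CARD('a)) ^ l"
    using prob_qLRC_X_error_le[OF y] prob_qLRC_Z_error_le[OF y] len by (intro add_mono) simp_all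
  finally show ?thesis
    by simp
qed

lemma prob_low_weight_error_less:
  fixes \<delta> :: real
  assumes \<delta>: "0 < \<delta>" "\<delta> \<le> 1 - 1 / real CARD('a::{field,finite})"
    and len: "2 * (n div r) + 2 * l \<le> n"
  shows "measure_pmf.prob (random_qLRC n r l)
           (\<Union>y\<in>low_weight_vecs n (\<delta> * real n). qLRC_error n (y :: nat \<Rightarrow> 'a))
         < 2 * real CARD('a) powr (Hq (real CARD('a)) \<delta> * real n - real l)"
proof -
  define q where "q = real CARD('a)"
  define Y where "Y = (low_weight_vecs n (\<delta> * real n) :: (nat \<Rightarrow> 'a) set)"
  have q: "2 \<le> q"
    unfolding q_def using two_le_card_field[where 'a='a] by simp
  have "measure_pmf.prob (random_qLRC n r l) (\<Union>y\<in>Y. qLRC_error n y)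
      \<le> (\<Sum>y\<in>Y. measure_pmf.prob (random_qLRC n r l) (qLRC_error n y))"
    by (rule measure_pmf.finite_measure_subadditive_finite) (simp_all add: Y_def low_weight_vecs_def)
  also have "\<dots> \<le> (\<Sum>y\<in>Y. 2 * (1 / q) ^ l)"
    unfolding q_def using len by (intro sum_mono prob_qLRC_error_le) (simp_all add: Y_def low_weight_vecs_def)
  also have "\<dots> < q powr (Hq q \<delta> * real n) * (2 * (1 / q) ^ l)"
    using card_low_weight_vecs_less[OF \<delta>, of n] q by (simp add: Y_def q_def)
  also have "\<dots> = 2 * q powr (Hq q \<delta> * real n - real l)"
    using q by (simp add: powr_diff powr_realpow power_one_over)
  finally show ?thesis
    unfolding Y_def q_def .
qed

lemma prob_css_distance_ge_gt:
  fixes n r l :: nat and \<delta> e :: real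
  assumes r_dvd: "r dvd n" and l_bound: "real l < real n / 2 - real n / real r"
    and \<delta>: "0 < \<delta>" "\<delta> \<le> 1 - 1 / real CARD('a::{field,finite})"
    and l_ge: "(Hq (real CARD('a)) \<delta> + e) * real n \<le> real l"
  shows "1 - 2 * real CARD('a) powr (- e * real n)
     < measure_pmf.prob (random_qLRC n r l :: ((nat \<Rightarrow> 'a) list \<times> (nat \<Rightarrow> 'a) list) pmf)
         {(hx, hz). ereal (\<delta> * real n) \<le> ereal_of_enat (css_distance n (kerm n hx) (kerm n hz))}"
    (is "_ < measure_pmf.prob ?M ?G")
proof -
  let ?U = "\<Union>y\<in>low_weight_vecs n (\<delta> * real n). qLRC_error n (y :: nat \<Rightarrow> 'a)"
  have "real (n div r) = real n / real r"
    using r_dvd by (rule real_of_nat_div)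
  then have len: "2 * (n div r) + 2 * l \<le> n"
    using l_bound by linarith
  have "2 \<le> real CARD('a)"
    using two_le_card_field[where 'a='a] by simp
  then have "1 - 2 * real CARD('a) powr (- e * real n)
      \<le> 1 - 2 * real CARD('a) powr (Hq (real CARD('a)) \<delta> * real n - real l)"
    using l_ge by (simp add: algebra_simps)
  also have "\<dots> < 1 - measure_pmf.prob ?M ?U"
    using prob_low_weight_error_less[OF \<delta> len] by simp
  also have "\<dots> = measure_pmf.prob ?M (UNIV - ?U)"
    using measure_pmf.prob_compl[of ?U ?M] by simp
  also have "\<dots> \<le> measure_pmf.prob ?M ?G"
    by (rule measure_pmf.finite_measure_mono) (auto intro: ereal_le_css_distance_kerm)
  finally show ?thesis .
qed

theorem proposition4p4:
  fixes n r l :: nat and \<delta> \<epsilon> :: real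
  assumes r_pos: "0 < r" and r_dvd: "r dvd n"
    and l_bound: "real l < real n / 2 - real n / real r"
    and delta_pos: "0 < \<delta>" and delta_le: "\<delta> \<le> 1 - 1 / real CARD('a::{field,finite})"
    and eps_pos: "0 < \<epsilon>"
  defines "q \<equiv> real CARD('a)"
  defines "P \<equiv> measure_pmf.prob (random_qLRC n r l :: ((nat \<Rightarrow> 'a) list \<times> (nat \<Rightarrow> 'a) list) pmf)
                 {(hx, hz). ereal (\<delta> * real n) \<le> ereal_of_enat (css_distance n (kerm n hx) (kerm n hz))}"
  shows "(real l \<ge> (Hq q \<delta> + \<epsilon>) * real n \<longrightarrow> P > 1 - 2 * q powr (- \<epsilon> * real n))
       \<and> (q \<ge> 2 powr (2 / \<epsilon>) \<and> real l \<ge> (\<delta> + \<epsilon>) * real n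
            \<longrightarrow> P > 1 - 2 * q powr (- \<epsilon> * real n / 2))"
proof (intro conjI impI)
  note bound = prob_css_distance_ge_gt[OF r_dvd l_bound delta_pos delta_le, folded q_def P_def]
  show "P > 1 - 2 * q powr (- \<epsilon> * real n)" if "real l \<ge> (Hq q \<delta> + \<epsilon>) * real n"
    using bound that by blast
  assume q_l: "q \<ge> 2 powr (2 / \<epsilon>) \<and> real l \<ge> (\<delta> + \<epsilon>) * real n"
  have "0 < 1 / q"
    using two_le_card_field[where 'a='a] by (simp add: q_def)
  then have "\<delta> < 1"
    using delta_le unfolding q_def by linarith
  then have "Hq q \<delta> + \<epsilon> / 2 \<le> \<delta> + \<epsilon>"
    using Hq_le_add_half[OF delta_pos _ eps_pos] q_l by fastforce
  then have "(Hq q \<delta> + \<epsilon> / 2) * real n \<le> real l"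
    using q_l mult_right_mono[of _ _ "real n"] by (meson of_nat_0_le_iff order_trans)
  then show "P > 1 - 2 * q powr (- \<epsilon> * real n / 2)"
    using bound[of "\<epsilon> / 2"] by simp
qed

end
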